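(* Let $\alpha\in(0,1)$, let $p_X$ be a distribution on a finite set $\mathcal X$ and $p_{Y\mid X}$ a channel to a finite set $\mathcal Y$. Let $\tilde q^{(0)}_{X,Y}$ be an initial joint distribution on $\mathcal X\times\mathcal Y$ and for $k\ge0$ define $q_Y^{(k)}(y)=\sum_x\tilde q^{(k)}_{X,Y}(x,y)$ and $\tilde q^{(k+1)}_{X,Y}(x,y)=\bar q_X(x)\bar q_{Y\mid X}(y\mid x)$ where $$\bar q_X(x)=\frac{p_X(x)\big(\sum_yp_{Y\mid X}(y\mid x)^\alpha q^{(k)}_Y(y)^{1-\alpha}\big)^{1/\alpha}}{\sum_{x'}p_X(x')\big(\sum_yp_{Y\mid X}(y\mid x')^\alpha q^{(k)}_Y(y)^{1-\alpha}\big)^{1/\alpha}},\qquad \bar q_{Y\mid X}(y\mid x)=\frac{p_{Y\mid X}(y\mid x)^\alpha q^{(k)}_Y(y)^{1-\alpha}}{\sum_{y'}p_{Y\mid X}(y'\mid x)^\alpha q^{(k)}_Y(y')^{1-\alpha}}.$$ Then $$F_\alpha^{\mathrm{LP}}(\tilde q^{(0)}_{X,Y},q_Y^{(0)})\ge F_\alpha^{\mathrm{LP}}(\tilde q^{(1)}_{X,Y},q_Y^{(0)})\ge\cdots\ge F_\alpha^{\mathrm{LP}}(\tilde q^{(k)}_{X,Y},q_Y^{(k)})\ge F_\alpha^{\mathrm{LP}}(\tilde q^{(k+1)}_{X,Y},q_Y^{(k)})\ge\cdots\ge I_\alpha^{\mathrm{LP}}(X;Y).$$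
   Context: $\log$ is natural and $D$ is the Kullback–Leibler divergence. For a joint distribution $\tilde q_{X,Y}=\tilde q_X\tilde q_{Y\mid X}$ and a distribution $q_Y$ on $\mathcal Y$, $F_\alpha^{\mathrm{LP}}(\tilde q_{X,Y},q_Y):=\frac{\alpha}{1-\alpha}D(\tilde q_{X,Y}\|\tilde q_Xp_{Y\mid X})+D(\tilde q_X\tilde q_{Y\mid X}\|\tilde q_Xq_Y)+\frac{\alpha}{1-\alpha}D(\tilde q_X\|p_X)$. The Lapidoth–Pfister mutual information is $I_\alpha^{\mathrm{LP}}(X;Y):=\min_{q_X}\min_{q_Y}D_\alpha(p_Xp_{Y\mid X}\|q_Xq_Y)$ with $D_\alpha(p\|q):=\frac{1}{\alpha-1}\log\sum_zp(z)^\alpha q(z)^{1-\alpha}$. *)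

theory Defs
  imports Complex_Main "HOL-Library.Extended_Real"
begin

definition is_dist :: "('z::finite \<Rightarrow> real) \<Rightarrow> bool" where
  "is_dist P \<longleftrightarrow> (\<forall>z. 0 \<le> P z) \<and> (\<Sum>z\<in>UNIV. P z) = 1"

text \<open>A channel p_{Y|X}: W x y = p_{Y|X}(y|x).\<close>
definition is_channel :: "('x::finite \<Rightarrow> 'y::finite \<Rightarrow> real) \<Rightarrow> bool" where
  "is_channel W \<longleftrightarrow> (\<forall>x. is_dist (W x))"

definition KL :: "('z::finite \<Rightarrow> real) \<Rightarrow> ('z \<Rightarrow> real) \<Rightarrow> ereal" where
  "KL P Q = (\<Sum>z\<in>UNIV. if P z = 0 then 0
                        else if Q z = 0 then \<infinity>
                        else ereal (P z * ln (P z / Q z)))"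

definition margX :: "('x::finite \<times> 'y::finite \<Rightarrow> real) \<Rightarrow> 'x \<Rightarrow> real" where
  "margX q x = (\<Sum>y\<in>UNIV. q (x, y))"

definition margY :: "('x::finite \<times> 'y::finite \<Rightarrow> real) \<Rightarrow> 'y \<Rightarrow> real" where
  "margY q y = (\<Sum>x\<in>UNIV. q (x, y))"

definition F_LP :: "real \<Rightarrow> ('x::finite \<Rightarrow> real) \<Rightarrow> ('x \<Rightarrow> 'y::finite \<Rightarrow> real)
    \<Rightarrow> ('x \<times> 'y \<Rightarrow> real) \<Rightarrow> ('y \<Rightarrow> real) \<Rightarrow> ereal" where
  "F_LP \<alpha> pX W qt qY =
     ereal (\<alpha> / (1 - \<alpha>)) * KL qt (\<lambda>(x, y). margX qt x * W x y)
   + KL qt (\<lambda>(x, y). margX qt x * qY y)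
   + ereal (\<alpha> / (1 - \<alpha>)) * KL (margX qt) pX"

text \<open>Renyi divergence D_alpha(p||q) = 1/(alpha-1) log sum p^alpha q^(1-alpha), for alpha in (0,1);
  the value is +infinity when the sum vanishes (log 0 = -infinity).\<close>
definition renyi_div :: "real \<Rightarrow> ('z::finite \<Rightarrow> real) \<Rightarrow> ('z \<Rightarrow> real) \<Rightarrow> ereal" where
  "renyi_div \<alpha> P Q =
     (let S = (\<Sum>z\<in>UNIV. P z powr \<alpha> * Q z powr (1 - \<alpha>))
      in if S = 0 then \<infinity> else ereal (1 / (\<alpha> - 1) * ln S))"

text \<open>Lapidoth--Pfister mutual information (the minimum is the infimum, which is attained).\<close>
definition I_LP :: "real \<Rightarrow> ('x::finite \<Rightarrow> real) \<Rightarrow> ('x \<Rightarrow> 'y::finite \<Rightarrow> real) \<Rightarrow> ereal" where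
  "I_LP \<alpha> pX W =
     (INF qX \<in> {qX. is_dist qX}. INF qY \<in> {qY. is_dist qY}.
        renyi_div \<alpha> (\<lambda>(x, y). pX x * W x y) (\<lambda>(x, y). qX x * qY y))"

definition LP_inner :: "real \<Rightarrow> ('x::finite \<Rightarrow> 'y::finite \<Rightarrow> real) \<Rightarrow> ('y \<Rightarrow> real) \<Rightarrow> 'x \<Rightarrow> real" where
  "LP_inner \<alpha> W qY x = (\<Sum>y\<in>UNIV. W x y powr \<alpha> * qY y powr (1 - \<alpha>))"

definition LP_norm :: "real \<Rightarrow> ('x::finite \<Rightarrow> real) \<Rightarrow> ('x \<Rightarrow> 'y::finite \<Rightarrow> real) \<Rightarrow> ('y \<Rightarrow> real) \<Rightarrow> real" where
  "LP_norm \<alpha> pX W qY = (\<Sum>x\<in>UNIV. pX x * LP_inner \<alpha> W qY x powr (1 / \<alpha>))"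

definition LP_step :: "real \<Rightarrow> ('x::finite \<Rightarrow> real) \<Rightarrow> ('x \<Rightarrow> 'y::finite \<Rightarrow> real) \<Rightarrow> ('y \<Rightarrow> real)
    \<Rightarrow> 'x \<times> 'y \<Rightarrow> real" where
  "LP_step \<alpha> pX W qY = (\<lambda>(x, y).
     (pX x * LP_inner \<alpha> W qY x powr (1 / \<alpha>) / LP_norm \<alpha> pX W qY)
     * (W x y powr \<alpha> * qY y powr (1 - \<alpha>) / LP_inner \<alpha> W qY x))"

primrec LP_iter :: "real \<Rightarrow> ('x::finite \<Rightarrow> real) \<Rightarrow> ('x \<Rightarrow> 'y::finite \<Rightarrow> real) \<Rightarrow> ('x \<times> 'y \<Rightarrow> real)
    \<Rightarrow> nat \<Rightarrow> 'x \<times> 'y \<Rightarrow> real" where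
  "LP_iter \<alpha> pX W q0 0 = q0"
| "LP_iter \<alpha> pX W q0 (Suc k) = LP_step \<alpha> pX W (margY (LP_iter \<alpha> pX W q0 k))"

end

theory Submission
  imports Defs
begin

text \<open>With c = \<alpha>/(1-\<alpha>) and N(q_Y) = LP_norm, expanding the logarithms gives, on the support,
  F(q, q_Y) = (D(q || q_X qbar_{Y|X}) + \<alpha> D(q_X || qbar_X)) / (1-\<alpha>) - c ln N(q_Y).
  By Gibbs' inequality the update qbar_X qbar_{Y|X} therefore minimises F(-, q_Y), with minimum
  -c ln N(q_Y). For fixed q, F depends on q_Y only through
  D(q || q_X q_Y) = D(q || q_X q'_Y) + D(q'_Y || q_Y), where q'_Y is the Y-marginal of q, so q'_Y is
  optimal. Finally the Renyi divergence of p_X p_{Y|X} from qbar_X q_Y equals -c ln N(q_Y), which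
  therefore bounds I_LP from above.\<close>

section \<open>Distributions and marginals\<close>

lemma is_dist_nonneg: "is_dist P \<Longrightarrow> 0 \<le> P z"
  unfolding is_dist_def by simp

lemma is_dist_sum: "is_dist P \<Longrightarrow> sum P UNIV = 1"
  unfolding is_dist_def by simp

lemma is_channel_nonneg: "is_channel W \<Longrightarrow> 0 \<le> W x y"
  unfolding is_channel_def is_dist_def by simp

lemma sum_UNIV_prod:
  "(\<Sum>z\<in>UNIV. f z) = (\<Sum>x\<in>UNIV. \<Sum>y\<in>(UNIV::'b::finite set). f (x::'a::finite, y))"
  by (simp add: sum.cartesian_product' flip: UNIV_Times_UNIV)

lemma sum_weighted_fst: "(\<Sum>z\<in>UNIV. q z * f (fst z)) = (\<Sum>x\<in>UNIV. margX q x * f x)"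
  unfolding margX_def by (simp add: sum_UNIV_prod sum_distrib_right)

lemma sum_weighted_snd: "(\<Sum>z\<in>UNIV. q z * f (snd z)) = (\<Sum>y\<in>UNIV. margY q y * f y)"
  unfolding margY_def sum_UNIV_prod[of "\<lambda>z. q z * f (snd z)"]
  by (subst sum.swap) (simp add: sum_distrib_right)

lemma sum_margX: "sum (margX q) UNIV = sum q UNIV"
  using sum_weighted_fst[of q "\<lambda>_. 1"] by simp

lemma sum_margY: "sum (margY q) UNIV = sum q UNIV"
  using sum_weighted_snd[of q "\<lambda>_. 1"] by simp

lemma le_margX: "(\<And>z. 0 \<le> q z) \<Longrightarrow> q (x, y) \<le> margX q x"
  unfolding margX_def by (rule member_le_sum[where f = "\<lambda>y. q (x, y)"]) auto

lemma le_margY: "(\<And>z. 0 \<le> q z) \<Longrightarrow> q (x, y) \<le> margY q y"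
  unfolding margY_def by (rule member_le_sum[where f = "\<lambda>x. q (x, y)"]) auto

lemma is_dist_margX: "is_dist q \<Longrightarrow> is_dist (margX q)"
  unfolding is_dist_def sum_margX by (auto simp: margX_def intro!: sum_nonneg)

lemma is_dist_margY: "is_dist q \<Longrightarrow> is_dist (margY q)"
  unfolding is_dist_def sum_margY by (auto simp: margY_def intro!: sum_nonneg)

lemma margX_neq_0E:
  assumes "margX q x \<noteq> 0" obtains y where "q (x, y) \<noteq> 0"
  using assms unfolding margX_def by (metis (mono_tags, lifting) sum.neutral)

lemma margY_neq_0E:
  assumes "margY q y \<noteq> 0" obtains x where "q (x, y) \<noteq> 0"
  using assms unfolding margY_def by (metis (mono_tags, lifting) sum.neutral)

section \<open>Relative entropy\<close>

definition rel_entr :: "('z::finite \<Rightarrow> real) \<Rightarrow> ('z \<Rightarrow> real) \<Rightarrow> real" where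
  "rel_entr P Q = (\<Sum>z\<in>UNIV. P z * ln (P z / Q z))"

lemma KL_eq_rel_entr:
  assumes "\<And>z. P z \<noteq> 0 \<Longrightarrow> Q z \<noteq> 0"
  shows "KL P Q = ereal (rel_entr P Q)"
proof -
  have "KL P Q = (\<Sum>z\<in>UNIV. ereal (P z * ln (P z / Q z)))"
    unfolding KL_def using assms by (intro sum.cong) auto
  then show ?thesis by (simp add: rel_entr_def)
qed

lemma KL_eq_infinity:
  assumes "P z \<noteq> 0" "Q z = 0"
  shows "KL P Q = \<infinity>"
  unfolding KL_def sum_Pinfty using assms by auto

lemma KL_not_MInfty: "KL P Q \<noteq> -\<infinity>"
proof (cases "\<exists>z. P z \<noteq> 0 \<and> Q z = 0")
  case True
  then show ?thesis using KL_eq_infinity by fastforce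
next
  case False
  then show ?thesis by (subst KL_eq_rel_entr) auto
qed

lemma rel_entr_self: "rel_entr P P = 0"
  unfolding rel_entr_def by (intro sum.neutral) simp

lemma rel_entr_nonneg:
  assumes "\<And>z. 0 \<le> P z" "\<And>z. 0 \<le> Q z" "\<And>z. P z \<noteq> 0 \<Longrightarrow> Q z \<noteq> 0"
    and "sum Q UNIV \<le> sum P UNIV"
  shows "0 \<le> rel_entr P Q"
proof -
  have "P z - Q z \<le> P z * ln (P z / Q z)" for z
  proof (cases "P z = 0")
    case False
    then have P: "0 < P z" and Q: "0 < Q z" using assms(1-3)[of z] by (auto simp: order_less_le)
    have "P z * ln (Q z / P z) \<le> P z * (Q z / P z - 1)"
      using P Q by (intro mult_left_mono ln_le_minus_one) auto
    moreover have "ln (P z / Q z) = - ln (Q z / P z)" using P Q by (simp add: ln_div)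
    moreover have "P z * (Q z / P z - 1) = Q z - P z" using P by (simp add: field_simps)
    ultimately show ?thesis by simp
  qed (use assms in auto)
  then have "sum P UNIV - sum Q UNIV \<le> rel_entr P Q"
    unfolding rel_entr_def sum_subtractf[symmetric] by (rule sum_mono)
  then show ?thesis using assms(4) by linarith
qed

lemma rel_entr_margX_kernel_nonneg:
  assumes q: "is_dist q" and K: "\<And>x y. 0 \<le> K x y" "\<And>x. sum (K x) UNIV \<le> 1"
    and supp: "\<And>x y. q (x, y) \<noteq> 0 \<Longrightarrow> K x y \<noteq> 0"
  shows "0 \<le> rel_entr q (\<lambda>(x, y). margX q x * K x y)"
proof (rule rel_entr_nonneg)
  have "sum (\<lambda>(x, y). margX q x * K x y) UNIV = (\<Sum>x\<in>UNIV. margX q x * sum (K x) UNIV)"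
    by (simp add: sum_UNIV_prod sum_distrib_left)
  also have "\<dots> \<le> sum (margX q) UNIV"
    using is_dist_margX[OF q] K by (intro sum_mono mult_left_le) (auto intro: is_dist_nonneg)
  finally show "sum (\<lambda>(x, y). margX q x * K x y) UNIV \<le> sum q UNIV"
    by (simp add: sum_margX)
  have "margX q x \<noteq> 0" if "q (x, y) \<noteq> 0" for x y
    using le_margX[of q x y] is_dist_nonneg[OF q] that by (metis antisym)
  then show "q z \<noteq> 0 \<Longrightarrow> (\<lambda>(x, y). margX q x * K x y) z \<noteq> 0" for z
    using supp by (cases z) auto
qed (use q is_dist_margX[OF q] K in \<open>auto intro: is_dist_nonneg mult_nonneg_nonneg\<close>)

lemma rel_entr_prod_margY:
  assumes q: "\<And>z. 0 \<le> q z" and pos: "\<And>x y. q (x, y) \<noteq> 0 \<Longrightarrow> 0 < f x \<and> 0 < qY y"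
  shows "rel_entr q (\<lambda>(x, y). f x * qY y)
    = rel_entr q (\<lambda>(x, y). f x * margY q y) + rel_entr (margY q) qY"
proof -
  have "q z * ln (q z / (case z of (x, y) \<Rightarrow> f x * qY y))
      = q z * ln (q z / (case z of (x, y) \<Rightarrow> f x * margY q y)) + q z * ln (margY q (snd z) / qY (snd z))"
    for z
  proof (cases z)
    case (Pair x y)
    show ?thesis
    proof (cases "q z = 0")
      case False
      have "q (x, y) \<le> margY q y" using q by (rule le_margY)
      then show ?thesis using pos[of x y] q[of z] False Pair by (simp add: ln_div ln_mult algebra_simps)
    qed simp
  qed
  then show ?thesis
    using sum_weighted_snd[of q "\<lambda>y. ln (margY q y / qY y)"]
    by (simp add: rel_entr_def sum.distrib)
qed

section \<open>The update step\<close>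

definition LP_step_marg :: "real \<Rightarrow> ('x::finite \<Rightarrow> real) \<Rightarrow> ('x \<Rightarrow> 'y::finite \<Rightarrow> real) \<Rightarrow> ('y \<Rightarrow> real)
    \<Rightarrow> 'x \<Rightarrow> real" where
  "LP_step_marg \<alpha> pX W qY x = pX x * LP_inner \<alpha> W qY x powr (1 / \<alpha>) / LP_norm \<alpha> pX W qY"

definition LP_step_cond :: "real \<Rightarrow> ('x::finite \<Rightarrow> 'y::finite \<Rightarrow> real) \<Rightarrow> ('y \<Rightarrow> real) \<Rightarrow> 'x \<Rightarrow> 'y \<Rightarrow> real"
  where "LP_step_cond \<alpha> W qY x y = W x y powr \<alpha> * qY y powr (1 - \<alpha>) / LP_inner \<alpha> W qY x"

lemma LP_step_eq: "LP_step \<alpha> pX W qY (x, y) = LP_step_marg \<alpha> pX W qY x * LP_step_cond \<alpha> W qY x y"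
  by (simp add: LP_step_def LP_step_marg_def LP_step_cond_def)

lemma LP_inner_nonneg: "0 \<le> LP_inner \<alpha> W qY x"
  unfolding LP_inner_def by (intro sum_nonneg) simp

lemma LP_inner_pos:
  assumes "0 < W x y" "0 < qY y"
  shows "0 < LP_inner \<alpha> W qY x"
proof -
  have "0 < W x y powr \<alpha> * qY y powr (1 - \<alpha>)" using assms by simp
  also have "\<dots> \<le> LP_inner \<alpha> W qY x"
    unfolding LP_inner_def by (rule member_le_sum[where f = "\<lambda>y. W x y powr \<alpha> * qY y powr (1 - \<alpha>)"]) auto
  finally show ?thesis .
qed

lemma LP_norm_nonneg: "(\<And>x. 0 \<le> pX x) \<Longrightarrow> 0 \<le> LP_norm \<alpha> pX W qY"
  unfolding LP_norm_def by (intro sum_nonneg) simp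

lemma LP_norm_pos_iff:
  assumes "\<And>x. 0 \<le> pX x" "\<And>x y. 0 \<le> W x y" "\<And>y. 0 \<le> qY y"
  shows "0 < LP_norm \<alpha> pX W qY \<longleftrightarrow> (\<exists>x y. 0 < pX x \<and> 0 < W x y \<and> 0 < qY y)"
proof
  assume "0 < LP_norm \<alpha> pX W qY"
  then obtain x where "pX x * LP_inner \<alpha> W qY x powr (1 / \<alpha>) \<noteq> 0"
    unfolding LP_norm_def by (metis (mono_tags, lifting) less_irrefl sum.neutral)
  then have "pX x \<noteq> 0" "LP_inner \<alpha> W qY x \<noteq> 0" by auto
  moreover from this(2) obtain y where "W x y powr \<alpha> * qY y powr (1 - \<alpha>) \<noteq> 0"
    unfolding LP_inner_def by (metis (mono_tags, lifting) sum.neutral)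
  ultimately show "\<exists>x y. 0 < pX x \<and> 0 < W x y \<and> 0 < qY y"
    using assms by (metis order_less_le powr_eq_0_iff mult_eq_0_iff)
next
  assume "\<exists>x y. 0 < pX x \<and> 0 < W x y \<and> 0 < qY y"
  then obtain x y where "0 < pX x" "0 < W x y" "0 < qY y" by blast
  then have "0 < pX x * LP_inner \<alpha> W qY x powr (1 / \<alpha>)" using LP_inner_pos[of W x y qY \<alpha>] by simp
  also have "\<dots> \<le> LP_norm \<alpha> pX W qY"
    unfolding LP_norm_def
    by (rule member_le_sum[where f = "\<lambda>x. pX x * LP_inner \<alpha> W qY x powr (1 / \<alpha>)"]) (use assms in auto)
  finally show "0 < LP_norm \<alpha> pX W qY" .
qed

lemma LP_step_cond_nonneg: "0 \<le> LP_step_cond \<alpha> W qY x y"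
  unfolding LP_step_cond_def using LP_inner_nonneg[of \<alpha> W qY x] by simp

lemma sum_LP_step_cond:
  "(\<Sum>y\<in>UNIV. LP_step_cond \<alpha> W qY x y) = (if LP_inner \<alpha> W qY x = 0 then 0 else 1)"
  unfolding LP_step_cond_def by (simp add: LP_inner_def flip: sum_divide_distrib)

lemma LP_step_marg_nonneg: "(\<And>x. 0 \<le> pX x) \<Longrightarrow> 0 \<le> LP_step_marg \<alpha> pX W qY x"
  unfolding LP_step_marg_def by (simp add: LP_norm_nonneg)

lemma is_dist_LP_step_marg:
  "(\<And>x. 0 \<le> pX x) \<Longrightarrow> 0 < LP_norm \<alpha> pX W qY \<Longrightarrow> is_dist (LP_step_marg \<alpha> pX W qY)"
  unfolding is_dist_def LP_step_marg_def by (simp add: LP_norm_def flip: sum_divide_distrib)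

lemma margX_LP_step: "margX (LP_step \<alpha> pX W qY) = LP_step_marg \<alpha> pX W qY"
proof
  fix x
  have "margX (LP_step \<alpha> pX W qY) x = LP_step_marg \<alpha> pX W qY x * (\<Sum>y\<in>UNIV. LP_step_cond \<alpha> W qY x y)"
    unfolding margX_def LP_step_eq by (simp add: sum_distrib_left)
  then show "margX (LP_step \<alpha> pX W qY) x = LP_step_marg \<alpha> pX W qY x"
    by (simp add: sum_LP_step_cond LP_step_marg_def)
qed

lemma is_dist_LP_step:
  assumes "\<And>x. 0 \<le> pX x" "0 < LP_norm \<alpha> pX W qY"
  shows "is_dist (LP_step \<alpha> pX W qY)"
proof -
  have "sum (LP_step \<alpha> pX W qY) UNIV = 1"
    using is_dist_LP_step_marg[OF assms] by (simp add: is_dist_def flip: sum_margX margX_LP_step)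
  moreover have "0 \<le> LP_step \<alpha> pX W qY z" for z
    using assms by (cases z) (simp add: LP_step_eq LP_step_marg_nonneg LP_step_cond_nonneg)
  ultimately show ?thesis by (simp add: is_dist_def)
qed

lemma LP_norm_margY_LP_step_pos:
  assumes pX: "\<And>x. 0 \<le> pX x" and W: "\<And>x y. 0 \<le> W x y" and qY: "\<And>y. 0 \<le> qY y"
    and N: "0 < LP_norm \<alpha> pX W qY"
  shows "0 < LP_norm \<alpha> pX W (margY (LP_step \<alpha> pX W qY))"
proof -
  let ?q = "LP_step \<alpha> pX W qY"
  have "\<exists>x y. 0 < pX x \<and> 0 < W x y \<and> 0 < qY y"
    using N by (simp add: LP_norm_pos_iff pX W qY)
  then obtain x y where xy: "0 < pX x" "0 < W x y" "0 < qY y" by blast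
  then have "0 < ?q (x, y)"
    using N LP_inner_pos[of W x y qY \<alpha>] by (simp add: LP_step_eq LP_step_marg_def LP_step_cond_def)
  also have "\<dots> \<le> margY ?q y"
    using is_dist_LP_step[OF pX N] by (intro le_margY is_dist_nonneg)
  finally have "0 < margY ?q y" .
  moreover have "0 \<le> margY ?q y'" for y'
    using is_dist_LP_step[OF pX N] by (intro is_dist_nonneg is_dist_margY)
  ultimately show ?thesis using xy by (subst LP_norm_pos_iff) (auto intro: pX W)
qed

section \<open>The objective F_LP\<close>

lemma LP_log_identity:
  fixes \<alpha> q a w v p Z N :: real
  assumes "0 < \<alpha>" "\<alpha> < 1" "0 < q" "0 < a" "0 < w" "0 < v" "0 < p" "0 < Z" "0 < N"
  shows "\<alpha> / (1 - \<alpha>) * ln (q / (a * w)) + ln (q / (a * v)) + \<alpha> / (1 - \<alpha>) * ln (a / p)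
    = (ln (q / (a * (w powr \<alpha> * v powr (1 - \<alpha>) / Z)))
        + \<alpha> * ln (a / (p * Z powr (1 / \<alpha>) / N))) / (1 - \<alpha>) - \<alpha> / (1 - \<alpha>) * ln N"
proof -
  have logs: "ln (q / (a * (w powr \<alpha> * v powr (1 - \<alpha>) / Z))) = ln q - ln a - \<alpha> * ln w - (1 - \<alpha>) * ln v + ln Z"
    "ln (a / (p * Z powr (1 / \<alpha>) / N)) = ln a - ln p - ln Z / \<alpha> + ln N"
    "ln (q / (a * w)) = ln q - ln a - ln w" "ln (q / (a * v)) = ln q - ln a - ln v"
    "ln (a / p) = ln a - ln p"
    using assms by (simp_all add: ln_div ln_mult)
  have "1 - \<alpha> \<noteq> 0" "\<alpha> \<noteq> 0" using assms by auto
  then show ?thesis unfolding logs by (simp add: divide_simps) (simp add: algebra_simps)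
qed

lemma F_LP_eq_infinity:
  assumes \<alpha>: "0 < \<alpha>" "\<alpha> < 1" and q: "\<And>z. 0 \<le> q z" and "q (x, y) \<noteq> 0"
    and "W x y = 0 \<or> qY y = 0 \<or> pX x = 0"
  shows "F_LP \<alpha> pX W q qY = \<infinity>"
proof -
  have "0 < q (x, y)" using q[of "(x, y)"] \<open>q (x, y) \<noteq> 0\<close> by simp
  then have "margX q x \<noteq> 0" using le_margX[of q x y] q by simp
  then have "KL q (\<lambda>(x, y). margX q x * W x y) = \<infinity> \<or> KL q (\<lambda>(x, y). margX q x * qY y) = \<infinity>
      \<or> KL (margX q) pX = \<infinity>"
    using assms(4,5) KL_eq_infinity[of q "(x, y)"] KL_eq_infinity[of "margX q" x pX] by auto
  moreover have "0 < \<alpha> / (1 - \<alpha>)" using \<alpha> by simp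
  ultimately show ?thesis
    unfolding F_LP_def using KL_not_MInfty by (auto simp: ereal_plus_eq_PInfty)
qed

lemma F_LP_eq_rel_entr:
  assumes q: "\<And>z. 0 \<le> q z"
    and supp: "\<And>x y. q (x, y) \<noteq> 0 \<Longrightarrow> W x y \<noteq> 0 \<and> qY y \<noteq> 0 \<and> pX x \<noteq> 0"
  shows "F_LP \<alpha> pX W q qY = ereal (\<alpha> / (1 - \<alpha>) * rel_entr q (\<lambda>(x, y). margX q x * W x y)
      + rel_entr q (\<lambda>(x, y). margX q x * qY y) + \<alpha> / (1 - \<alpha>) * rel_entr (margX q) pX)"
proof -
  have "margX q x \<noteq> 0" if "q (x, y) \<noteq> 0" for x y
  proof -
    have "q (x, y) \<le> margX q x" using q by (rule le_margX)
    then show ?thesis using q[of "(x, y)"] that by simp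
  qed
  moreover have "margX q x \<noteq> 0 \<Longrightarrow> pX x \<noteq> 0" for x by (metis margX_neq_0E supp)
  ultimately show ?thesis
    unfolding F_LP_def by (subst (1 2 3) KL_eq_rel_entr) (auto dest: supp)
qed

lemma F_LP_decomp:
  fixes q :: "'x::finite \<times> 'y::finite \<Rightarrow> real"
  assumes \<alpha>: "0 < \<alpha>" "\<alpha> < 1" and q: "is_dist q" and pX: "\<And>x. 0 \<le> pX x"
    and W: "\<And>x y. 0 \<le> W x y" and qY: "\<And>y. 0 \<le> qY y" and N: "0 < LP_norm \<alpha> pX W qY"
    and supp: "\<And>x y. q (x, y) \<noteq> 0 \<Longrightarrow> W x y \<noteq> 0 \<and> qY y \<noteq> 0 \<and> pX x \<noteq> 0"
  shows "F_LP \<alpha> pX W q qY = ereal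
    ((rel_entr q (\<lambda>(x, y). margX q x * LP_step_cond \<alpha> W qY x y)
      + \<alpha> * rel_entr (margX q) (LP_step_marg \<alpha> pX W qY)) / (1 - \<alpha>)
     - \<alpha> / (1 - \<alpha>) * ln (LP_norm \<alpha> pX W qY))"
proof -
  define c where "c = \<alpha> / (1 - \<alpha>)"
  let ?qX = "margX q" and ?N = "LP_norm \<alpha> pX W qY"
  have pointwise: "c * ln (q (x, y) / (?qX x * W x y)) + ln (q (x, y) / (?qX x * qY y))
      + c * ln (?qX x / pX x)
    = (ln (q (x, y) / (?qX x * LP_step_cond \<alpha> W qY x y))
      + \<alpha> * ln (?qX x / LP_step_marg \<alpha> pX W qY x)) / (1 - \<alpha>) - c * ln ?N"
    if "q (x, y) \<noteq> 0" for x y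
  proof -
    have "0 < q (x, y)" using is_dist_nonneg[OF q, of "(x, y)"] that by simp
    moreover have "q (x, y) \<le> ?qX x" using q by (intro le_margX is_dist_nonneg)
    moreover have "0 < W x y" "0 < qY y" "0 < pX x" using supp[OF that] W[of x y] qY[of y] pX[of x] by auto
    moreover from this have "0 < LP_inner \<alpha> W qY x" by (intro LP_inner_pos)
    ultimately show ?thesis unfolding c_def LP_step_cond_def LP_step_marg_def
      using \<alpha> N by (subst LP_log_identity) auto
  qed
  have "F_LP \<alpha> pX W q qY = ereal (\<Sum>z\<in>UNIV. q z * (c * ln (q z / (?qX (fst z) * W (fst z) (snd z)))
        + ln (q z / (?qX (fst z) * qY (snd z))) + c * ln (?qX (fst z) / pX (fst z))))"
    using F_LP_eq_rel_entr[of q W qY pX \<alpha>, OF is_dist_nonneg[OF q] supp]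
    by (simp add: c_def rel_entr_def case_prod_beta sum.distrib sum_distrib_left
        distrib_left mult.left_commute flip: sum_weighted_fst[of q "\<lambda>x. ln (?qX x / pX x)"])
  also have "(\<Sum>z\<in>UNIV. q z * (c * ln (q z / (?qX (fst z) * W (fst z) (snd z)))
        + ln (q z / (?qX (fst z) * qY (snd z))) + c * ln (?qX (fst z) / pX (fst z))))
    = (\<Sum>z\<in>UNIV. q z * ((ln (q z / (?qX (fst z) * LP_step_cond \<alpha> W qY (fst z) (snd z)))
        + \<alpha> * ln (?qX (fst z) / LP_step_marg \<alpha> pX W qY (fst z))) / (1 - \<alpha>) - c * ln ?N))"
    by (intro sum.cong refl) (metis pointwise prod.collapse mult_zero_left)
  also have "\<dots> = ((\<Sum>z\<in>UNIV. q z * ln (q z / (?qX (fst z) * LP_step_cond \<alpha> W qY (fst z) (snd z))))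
      + \<alpha> * (\<Sum>z\<in>UNIV. q z * ln (?qX (fst z) / LP_step_marg \<alpha> pX W qY (fst z)))) / (1 - \<alpha>)
      - c * ln ?N * sum q UNIV"
    by (simp add: algebra_simps add_divide_distrib sum_subtractf sum.distrib sum_distrib_left
        sum_distrib_right flip: sum_divide_distrib)
  also have "\<dots> = (rel_entr q (\<lambda>(x, y). ?qX x * LP_step_cond \<alpha> W qY x y)
      + \<alpha> * rel_entr ?qX (LP_step_marg \<alpha> pX W qY)) / (1 - \<alpha>) - c * ln ?N"
    using is_dist_sum[OF q] sum_weighted_fst[of q "\<lambda>x. ln (?qX x / LP_step_marg \<alpha> pX W qY x)"]
    by (simp add: rel_entr_def case_prod_beta)
  finally show ?thesis by (simp add: c_def)
qed

lemma F_LP_LP_step: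
  assumes \<alpha>: "0 < \<alpha>" "\<alpha> < 1" and pX: "\<And>x. 0 \<le> pX x" and W: "\<And>x y. 0 \<le> W x y"
    and qY: "\<And>y. 0 \<le> qY y" and N: "0 < LP_norm \<alpha> pX W qY"
  shows "F_LP \<alpha> pX W (LP_step \<alpha> pX W qY) qY = ereal (- (\<alpha> / (1 - \<alpha>)) * ln (LP_norm \<alpha> pX W qY))"
proof -
  have supp: "W x y \<noteq> 0 \<and> qY y \<noteq> 0 \<and> pX x \<noteq> 0" if "LP_step \<alpha> pX W qY (x, y) \<noteq> 0" for x y
    using that by (auto simp: LP_step_eq LP_step_marg_def LP_step_cond_def)
  have "(\<lambda>(x, y). margX (LP_step \<alpha> pX W qY) x * LP_step_cond \<alpha> W qY x y) = LP_step \<alpha> pX W qY"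
    by (auto simp: margX_LP_step LP_step_eq)
  then show ?thesis
    using F_LP_decomp[OF \<alpha> is_dist_LP_step[OF pX N] pX W qY N supp]
    by (simp add: margX_LP_step rel_entr_self)
qed

lemma F_LP_ge_LP_step:
  fixes q :: "'x::finite \<times> 'y::finite \<Rightarrow> real"
  assumes \<alpha>: "0 < \<alpha>" "\<alpha> < 1" and q: "is_dist q" and pX: "\<And>x. 0 \<le> pX x"
    and W: "\<And>x y. 0 \<le> W x y" and qY: "\<And>y. 0 \<le> qY y" and N: "0 < LP_norm \<alpha> pX W qY"
  shows "F_LP \<alpha> pX W (LP_step \<alpha> pX W qY) qY \<le> F_LP \<alpha> pX W q qY"
proof (cases "\<exists>x y. q (x, y) \<noteq> 0 \<and> (W x y = 0 \<or> qY y = 0 \<or> pX x = 0)")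
  case True
  then show ?thesis using F_LP_eq_infinity[OF \<alpha>, of q] is_dist_nonneg[OF q] by fastforce
next
  case False
  then have supp: "W x y \<noteq> 0 \<and> qY y \<noteq> 0 \<and> pX x \<noteq> 0" if "q (x, y) \<noteq> 0" for x y
    using that by blast
  have pos: "0 < LP_step_marg \<alpha> pX W qY x \<and> 0 < LP_step_cond \<alpha> W qY x y" if "q (x, y) \<noteq> 0" for x y
  proof -
    have "0 < W x y" "0 < qY y" "0 < pX x" using supp[OF that] W[of x y] qY[of y] pX[of x] by auto
    moreover from this have "0 < LP_inner \<alpha> W qY x" by (intro LP_inner_pos)
    ultimately show ?thesis using N by (simp add: LP_step_marg_def LP_step_cond_def)
  qed
  have cond: "0 \<le> rel_entr q (\<lambda>(x, y). margX q x * LP_step_cond \<alpha> W qY x y)"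
    using q by (rule rel_entr_margX_kernel_nonneg)
      (auto simp: LP_step_cond_nonneg sum_LP_step_cond dest!: pos)
  have marg: "0 \<le> rel_entr (margX q) (LP_step_marg \<alpha> pX W qY)"
  proof (rule rel_entr_nonneg)
    show "margX q x \<noteq> 0 \<Longrightarrow> LP_step_marg \<alpha> pX W qY x \<noteq> 0" for x
      by (metis margX_neq_0E pos less_irrefl)
  qed (use is_dist_margX[OF q] is_dist_LP_step_marg[OF pX N] in \<open>auto simp: is_dist_nonneg is_dist_sum\<close>)
  show ?thesis
    using F_LP_LP_step[OF \<alpha> pX W qY N] F_LP_decomp[OF \<alpha> q pX W qY N supp] cond marg \<alpha>
    by simp
qed

lemma KL_prod_margY_le:
  fixes q :: "'x::finite \<times> 'y::finite \<Rightarrow> real"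
  assumes q: "is_dist q" and qY: "is_dist qY" and f: "\<And>x. 0 \<le> f x"
  shows "KL q (\<lambda>(x, y). f x * margY q y) \<le> KL q (\<lambda>(x, y). f x * qY y)"
proof (cases "\<exists>x y. q (x, y) \<noteq> 0 \<and> f x * qY y = 0")
  case True
  then show ?thesis using KL_eq_infinity[of q] by fastforce
next
  case False
  let ?qY = "margY q"
  have pos: "0 < f x \<and> 0 < qY y \<and> 0 < ?qY y" if "q (x, y) \<noteq> 0" for x y
  proof -
    have "0 < q (x, y)" using is_dist_nonneg[OF q, of "(x, y)"] that by simp
    moreover have "q (x, y) \<le> ?qY y" using q by (intro le_margY is_dist_nonneg)
    moreover have "f x \<noteq> 0" "qY y \<noteq> 0" using False that by auto
    ultimately show ?thesis using f[of x] is_dist_nonneg[OF qY, of y] by simp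
  qed
  have "rel_entr q (\<lambda>(x, y). f x * qY y) = rel_entr q (\<lambda>(x, y). f x * ?qY y) + rel_entr ?qY qY"
    using is_dist_nonneg[OF q] pos by (intro rel_entr_prod_margY) auto
  moreover have "0 \<le> rel_entr ?qY qY"
  proof (rule rel_entr_nonneg)
    show "?qY y \<noteq> 0 \<Longrightarrow> qY y \<noteq> 0" for y by (metis margY_neq_0E pos less_irrefl)
  qed (use q qY is_dist_margY[OF q] in \<open>auto simp: is_dist_nonneg is_dist_sum\<close>)
  ultimately have "rel_entr q (\<lambda>(x, y). f x * ?qY y) \<le> rel_entr q (\<lambda>(x, y). f x * qY y)"
    by simp
  then show ?thesis by (subst (1 2) KL_eq_rel_entr) (auto dest!: pos)
qed

lemma F_LP_margY_le:
  assumes "is_dist q" "is_dist qY"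
  shows "F_LP \<alpha> pX W q (margY q) \<le> F_LP \<alpha> pX W q qY"
  unfolding F_LP_def using assms
  by (intro add_mono order_refl KL_prod_margY_le) (auto intro: is_dist_nonneg is_dist_margX)

section \<open>Comparison with the Lapidoth--Pfister mutual information\<close>

lemma LP_powr_identity:
  fixes \<alpha> p Z N :: real
  assumes "0 < \<alpha>" "\<alpha> < 1" "0 \<le> p" "0 \<le> Z" "0 < N"
  shows "p powr \<alpha> * (p * Z powr (1 / \<alpha>) / N) powr (1 - \<alpha>) * Z = p * Z powr (1 / \<alpha>) * N powr (\<alpha> - 1)"
proof (cases "p = 0 \<or> Z = 0")
  case False
  then have "0 < p" "0 < Z" using assms by auto
  then have "ln (p powr \<alpha> * (p * Z powr (1 / \<alpha>) / N) powr (1 - \<alpha>) * Z)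
      = ln (p * Z powr (1 / \<alpha>) * N powr (\<alpha> - 1))"
    using assms by (simp add: ln_mult ln_div field_simps)
  then show ?thesis using \<open>0 < p\<close> \<open>0 < Z\<close> \<open>0 < N\<close> by simp
qed auto

lemma renyi_div_LP_step_marg:
  assumes \<alpha>: "0 < \<alpha>" "\<alpha> < 1" and pX: "\<And>x. 0 \<le> pX x" and W: "\<And>x y. 0 \<le> W x y"
    and qY: "\<And>y. 0 \<le> qY y" and N: "0 < LP_norm \<alpha> pX W qY"
  shows "renyi_div \<alpha> (\<lambda>(x, y). pX x * W x y) (\<lambda>(x, y). LP_step_marg \<alpha> pX W qY x * qY y)
    = ereal (- (\<alpha> / (1 - \<alpha>)) * ln (LP_norm \<alpha> pX W qY))"
proof -
  let ?N = "LP_norm \<alpha> pX W qY"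
  have "(\<Sum>z\<in>UNIV. (case z of (x, y) \<Rightarrow> pX x * W x y) powr \<alpha>
          * (case z of (x, y) \<Rightarrow> LP_step_marg \<alpha> pX W qY x * qY y) powr (1 - \<alpha>))
      = (\<Sum>x\<in>UNIV. pX x powr \<alpha> * LP_step_marg \<alpha> pX W qY x powr (1 - \<alpha>) * LP_inner \<alpha> W qY x)"
    using pX W qY LP_step_marg_nonneg[OF pX]
    by (simp add: sum_UNIV_prod LP_inner_def sum_distrib_left powr_mult mult_ac)
  also have "\<dots> = (\<Sum>x\<in>UNIV. pX x * LP_inner \<alpha> W qY x powr (1 / \<alpha>) * ?N powr (\<alpha> - 1))"
    unfolding LP_step_marg_def
    by (intro sum.cong refl LP_powr_identity) (use \<alpha> pX N LP_inner_nonneg in auto)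
  also have "\<dots> = ?N * ?N powr (\<alpha> - 1)"
    by (simp add: LP_norm_def sum_distrib_right)
  also have "\<dots> = ?N powr \<alpha>"
    using N powr_add[of ?N 1 "\<alpha> - 1"] by simp
  finally show ?thesis
    using \<alpha> N by (simp add: renyi_div_def ln_powr field_simps)
qed

lemma I_LP_le_F_LP_step:
  assumes \<alpha>: "0 < \<alpha>" "\<alpha> < 1" and pX: "is_dist pX" and W: "\<And>x y. 0 \<le> W x y"
    and qY: "is_dist qY" and N: "0 < LP_norm \<alpha> pX W qY"
  shows "I_LP \<alpha> pX W \<le> F_LP \<alpha> pX W (LP_step \<alpha> pX W qY) qY"
proof -
  have pX0: "\<And>x. 0 \<le> pX x" and qY0: "\<And>y. 0 \<le> qY y" using pX qY by (auto intro: is_dist_nonneg)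
  have "I_LP \<alpha> pX W \<le> renyi_div \<alpha> (\<lambda>(x, y). pX x * W x y) (\<lambda>(x, y). LP_step_marg \<alpha> pX W qY x * qY y)"
    unfolding I_LP_def using is_dist_LP_step_marg[OF pX0 N] qY
    by (intro INF_lower2[of "LP_step_marg \<alpha> pX W qY"] INF_lower) auto
  then show ?thesis
    unfolding renyi_div_LP_step_marg[OF \<alpha> pX0 W qY0 N] F_LP_LP_step[OF \<alpha> pX0 W qY0 N] .
qed

lemma LP_iter_invariant:
  assumes pX: "is_dist pX" and W: "is_channel W" and q0: "is_dist q0"
    and N0: "0 < LP_norm \<alpha> pX W (margY q0)"
  shows "is_dist (LP_iter \<alpha> pX W q0 k) \<and> 0 < LP_norm \<alpha> pX W (margY (LP_iter \<alpha> pX W q0 k))"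
proof (induction k)
  case 0
  then show ?case using q0 N0 by simp
next
  case (Suc k)
  let ?qY = "margY (LP_iter \<alpha> pX W q0 k)"
  have pX0: "\<And>x. 0 \<le> pX x" and W0: "\<And>x y. 0 \<le> W x y" and qY0: "\<And>y. 0 \<le> ?qY y"
    using pX W Suc by (auto intro: is_dist_nonneg is_channel_nonneg is_dist_margY)
  have N: "0 < LP_norm \<alpha> pX W ?qY" using Suc by simp
  show ?case
    using is_dist_LP_step[OF pX0 N] LP_norm_margY_LP_step_pos[OF pX0 W0 qY0 N] by simp
qed

theorem lemma5:
  fixes \<alpha> :: real and pX :: "'x::finite \<Rightarrow> real" and W :: "'x \<Rightarrow> 'y::finite \<Rightarrow> real"
    and q0 :: "'x \<times> 'y \<Rightarrow> real"
  assumes "0 < \<alpha>" "\<alpha> < 1"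
    and "is_dist pX" and "is_channel W" and "is_dist q0"
    and "LP_norm \<alpha> pX W (margY q0) > 0"
  shows "\<forall>k. F_LP \<alpha> pX W (LP_iter \<alpha> pX W q0 k) (margY (LP_iter \<alpha> pX W q0 k))
               \<ge> F_LP \<alpha> pX W (LP_iter \<alpha> pX W q0 (Suc k)) (margY (LP_iter \<alpha> pX W q0 k))
          \<and> F_LP \<alpha> pX W (LP_iter \<alpha> pX W q0 (Suc k)) (margY (LP_iter \<alpha> pX W q0 k))
               \<ge> F_LP \<alpha> pX W (LP_iter \<alpha> pX W q0 (Suc k)) (margY (LP_iter \<alpha> pX W q0 (Suc k)))
          \<and> F_LP \<alpha> pX W (LP_iter \<alpha> pX W q0 k) (margY (LP_iter \<alpha> pX W q0 k)) \<ge> I_LP \<alpha> pX W"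
proof (intro allI conjI)
  fix k
  let ?q = "LP_iter \<alpha> pX W q0" and ?qY = "margY (LP_iter \<alpha> pX W q0 k)"
  have pX: "\<And>x. 0 \<le> pX x" and W: "\<And>x y. 0 \<le> W x y"
    using assms(3,4) by (auto intro: is_dist_nonneg is_channel_nonneg)
  have q: "\<And>n. is_dist (?q n)" and N: "0 < LP_norm \<alpha> pX W ?qY"
    using LP_iter_invariant[OF assms(3-6)] by auto
  have qY: "is_dist ?qY" using q by (rule is_dist_margY)
  then have qY0: "\<And>y. 0 \<le> ?qY y" by (rule is_dist_nonneg)
  have step_le: "F_LP \<alpha> pX W (?q (Suc k)) ?qY \<le> F_LP \<alpha> pX W (?q k) ?qY"
    using F_LP_ge_LP_step[OF assms(1,2) q pX W qY0 N] by simp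
  then show "F_LP \<alpha> pX W (?q (Suc k)) ?qY \<le> F_LP \<alpha> pX W (?q k) ?qY" .
  show "F_LP \<alpha> pX W (?q (Suc k)) (margY (?q (Suc k))) \<le> F_LP \<alpha> pX W (?q (Suc k)) ?qY"
    using q qY by (rule F_LP_margY_le)
  show "I_LP \<alpha> pX W \<le> F_LP \<alpha> pX W (?q k) ?qY"
    using I_LP_le_F_LP_step[OF assms(1-3) W qY N] step_le by simp
qed

end
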